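(* Let $c_0,c_1$ be convex loops with length measures $\mu_0,\mu_1$, and suppose that for some $j\in\{0,1\}$ the loop $c_j$ is degenerate with $\mu_j=r\delta_{x_j}+r\delta_{-x_j}$ ($r>0$, $x_j\in S^1$); let $i$ be the other index. Then there exists a sequence $x_j^k\in S^1$ with $x_j^k\to x_j$ as $k\to\infty$ such that, setting $\mu_j^k:=r\delta_{x_j^k}+r\delta_{-x_j^k}$, the pair $\mu_j^k,\mu_i$ is weakly admissible for all $k$.
   Context: $S^1$ is the unit circle in $\mathbb{C}$ (identified with $\mathbb{R}/2\pi\mathbb{Z}$, arc-length measure $\mathrm{d}s$, geodesic distance $\operatorname{dist}$). A convex loop is $c\in W^{1,1}(S^1,\mathbb{C})$ with $c'\neq0$ a.e. whose image is the boundary of a convex set in $\mathbb{C}$, positively oriented; its length measure is $\mu_c:=(T_c)_\#(|c'|\,\mathrm{d}s)$, $T_c=c'/|c'|$. Degenerate means $\mu_c=r\delta_x+r\delta_{-x}$ for some $r>0$, $x\in S^1$. Two measures $\mu_0,\mu_1\in\mathcal{M}_+(S^1)$ are weakly admissible if $\mu_a(\{x\in S^1:\operatorname{dist}(x,\operatorname{supp}\mu_b)\ge\pi/2\})=0$ for $\{a,b\}=\{0,1\}$. *)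

theory Defs
  imports "HOL-Probability.Probability" "HOL-Complex_Analysis.Complex_Analysis"
begin

text \<open>A loop on S^1 is
represented (via the identification S^1 = R/2piZ) as a 2pi-periodic function
c :: real => complex; its derivative c' is the classical derivative, which for a
W^{1,1} (absolutely continuous) function exists a.e. and equals the weak derivative.\<close>

definition loop_deriv :: "(real \<Rightarrow> complex) \<Rightarrow> real \<Rightarrow> complex" where
  "loop_deriv c t = vector_derivative c (at t)"

definition W11_loop :: "(real \<Rightarrow> complex) \<Rightarrow> bool" where
  "W11_loop c \<longleftrightarrow>
     (\<forall>t. c (t + 2*pi) = c t) \<and>
     loop_deriv c absolutely_integrable_on {0..2*pi} \<and>
     (\<forall>t\<in>{0..2*pi}. c t = c 0 + integral {0..t} (loop_deriv c))"

definition convex_loop :: "(real \<Rightarrow> complex) \<Rightarrow> bool" where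
  "convex_loop c \<longleftrightarrow>
     W11_loop c \<and>
     (AE t in lebesgue_on {0..2*pi}. loop_deriv c t \<noteq> 0) \<and>
     (\<exists>K. convex K \<and> c ` {0..2*pi} = frontier K \<and>
          (\<forall>z\<in>interior K. winding_number (\<lambda>u. c (2 * pi * u)) z = (1::complex)))"

definition length_measure :: "(real \<Rightarrow> complex) \<Rightarrow> complex measure" where
  "length_measure c =
     distr (density (lebesgue_on {0..2*pi}) (\<lambda>t. ennreal (cmod (loop_deriv c t))))
           borel (\<lambda>t. sgn (loop_deriv c t))"

definition two_point :: "real \<Rightarrow> complex \<Rightarrow> complex measure" where
  "two_point r x = measure_of UNIV (sets borel)
      (\<lambda>A. ennreal r * (indicator A x + indicator A (-x)))"

definition degenerate :: "(real \<Rightarrow> complex) \<Rightarrow> bool" where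
  "degenerate c \<longleftrightarrow> (\<exists>r x. r > 0 \<and> x \<in> sphere 0 1 \<and> length_measure c = two_point r x)"

definition sdist :: "complex \<Rightarrow> complex \<Rightarrow> real" where
  "sdist x y = arccos (Re (x * cnj y))"

definition sdist_set :: "complex \<Rightarrow> complex set \<Rightarrow> real" where
  "sdist_set x S = (INF y\<in>S. sdist x y)"

definition supp_S1 :: "complex measure \<Rightarrow> complex set" where
  "supp_S1 \<mu> = {x \<in> sphere 0 1. \<forall>e>0. emeasure \<mu> (ball x e \<inter> sphere 0 1) > 0}"

definition weakly_admissible :: "complex measure \<Rightarrow> complex measure \<Rightarrow> bool" where
  "weakly_admissible \<mu>0 \<mu>1 \<longleftrightarrow>
     emeasure \<mu>0 {x \<in> sphere 0 1. sdist_set x (supp_S1 \<mu>1) \<ge> pi/2} = 0 \<and>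
     emeasure \<mu>1 {x \<in> sphere 0 1. sdist_set x (supp_S1 \<mu>0) \<ge> pi/2} = 0"

end

theory Submission
  imports Defs
begin

text \<open>A closed loop satisfies \<integral> c' = 0, so its tangent directions cannot lie almost
  everywhere in an open half-plane Re (z cnj y) < 0. Hence if the length measure \<mu> of c
  does not charge the two points \<plusminus>iy of S^1 on the boundary line of that half-plane, its
  support meets Re (z cnj y) > 0; applied to y and to -y, both y and -y lie at geodesic
  distance < \<pi>/2 from supp \<mu>. In the other direction, the only points of S^1 at distance
  \<ge> \<pi>/2 from both y and -y are \<plusminus>iy, which \<mu> does not charge. Being finite, \<mu> has only
  countably many atoms, so such y exist arbitrarily close to x.\<close>

lemma W11_loop_integrable_deriv:
  assumes "W11_loop c"
  shows "integrable (lebesgue_on {0..2*pi}) (loop_deriv c)"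
  using assms unfolding W11_loop_def set_integrable_def
  by (subst integrable_restrict_space) auto

lemma W11_loop_integral_deriv_eq_0:
  assumes "W11_loop c"
  shows "integral\<^sup>L (lebesgue_on {0..2*pi}) (loop_deriv c) = 0"
proof -
  have ai: "loop_deriv c absolutely_integrable_on {0..2*pi}"
    and periodic: "c (0 + 2*pi) = c 0"
    and ftc: "\<forall>t\<in>{0..2*pi}. c t = c 0 + integral {0..t} (loop_deriv c)"
    using assms unfolding W11_loop_def by blast+
  have "integral {0..2*pi} (loop_deriv c) = 0"
    using periodic ftc[rule_format, of "2*pi"] by simp
  moreover have "(LINT t:{0..2*pi} | lebesgue. loop_deriv c t) = integral {0..2*pi} (loop_deriv c)"
    using ai by (rule set_lebesgue_integral_eq_integral)
  ultimately show ?thesis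
    unfolding set_lebesgue_integral_def by (subst integral_restrict_space) auto
qed

lemma W11_loop_not_AE_Re_deriv_neg:
  assumes "W11_loop c"
  shows "\<not> (AE t in lebesgue_on {0..2*pi}. Re (loop_deriv c t * cnj y) < 0)"
proof
  let ?L = "lebesgue_on {0..2*pi}" and ?f = "\<lambda>t. - Re (loop_deriv c t * cnj y)"
  assume neg: "AE t in ?L. Re (loop_deriv c t * cnj y) < 0"
  have T: "bounded_linear (\<lambda>z. - Re (z * cnj y))"
    by (intro bounded_linear_minus bounded_linear_compose[OF bounded_linear_Re] bounded_linear_mult_left)
  have "integrable ?L ?f"
    using T W11_loop_integrable_deriv[OF assms] by (rule integrable_bounded_linear)
  moreover have "AE t in ?L. 0 \<le> ?f t" using neg by eventually_elim simp
  moreover have "integral\<^sup>L ?L ?f = 0"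
    using integral_bounded_linear[OF T W11_loop_integrable_deriv[OF assms]]
    by (simp add: W11_loop_integral_deriv_eq_0[OF assms])
  ultimately have "AE t in ?L. ?f t = 0" by (simp add: integral_nonneg_eq_0_iff_AE)
  with neg have "AE t in ?L. False" by eventually_elim simp
  then have "emeasure ?L (space ?L) = 0"
    by (metis ae_filter_eq_bot_iff trivial_limit_def)
  then show False by (simp add: emeasure_restrict_space)
qed

lemma sets_length_measure [simp]: "sets (length_measure c) = sets borel"
  unfolding length_measure_def by simp

lemma finite_measure_length_measure:
  assumes "W11_loop c"
  shows "finite_measure (length_measure c)"
proof -
  define L where "L = lebesgue_on {0..2*pi}"
  have int: "integrable L (loop_deriv c)"
    using W11_loop_integrable_deriv[OF assms] unfolding L_def .
  have [measurable]: "loop_deriv c \<in> borel_measurable L"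
    using int by (rule borel_measurable_integrable)
  have "emeasure (density L (\<lambda>t. ennreal (cmod (loop_deriv c t)))) (space L)
      = (\<integral>\<^sup>+ t. ennreal (cmod (loop_deriv c t)) \<partial>L)"
    by (subst emeasure_density) (auto intro!: nn_integral_cong)
  also have "\<dots> < \<infinity>" using int unfolding integrable_iff_bounded by simp
  finally have "finite_measure (density L (\<lambda>t. ennreal (cmod (loop_deriv c t))))"
    by (intro finite_measureI) simp
  then show ?thesis
    unfolding length_measure_def L_def[symmetric] sgn_div_norm
    by (intro finite_measure.finite_measure_distr) auto
qed

lemma AE_length_measureD:
  assumes "W11_loop c" and "AE z in length_measure c. P z"
  shows "AE t in lebesgue_on {0..2*pi}. loop_deriv c t \<noteq> 0 \<longrightarrow> P (sgn (loop_deriv c t))"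
proof -
  have [measurable]: "loop_deriv c \<in> borel_measurable (lebesgue_on {0..2*pi})"
    using W11_loop_integrable_deriv[OF assms(1)] by (rule borel_measurable_integrable)
  have "AE t in density (lebesgue_on {0..2*pi}) (\<lambda>t. ennreal (cmod (loop_deriv c t))).
      P (sgn (loop_deriv c t))"
    using assms(2) unfolding length_measure_def
    by (rule AE_distrD[rotated]) (simp add: sgn_div_norm)
  then show ?thesis by (subst (asm) AE_density) auto
qed

lemma supp_S1_subset_sphere: "supp_S1 \<mu> \<subseteq> sphere 0 1"
  unfolding supp_S1_def by auto

lemma AE_in_supp_S1:
  assumes "sets \<mu> = sets borel"
  shows "AE z in \<mu>. z \<in> sphere 0 1 \<longrightarrow> z \<in> supp_S1 \<mu>"
proof -
  define F where "F = {ball w e | w e. e > 0 \<and> emeasure \<mu> (ball w e \<inter> sphere 0 1) = 0}"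
  obtain F' where F': "F' \<subseteq> F" "countable F'" "\<Union>F' = \<Union>F"
    using Lindelof[of F] unfolding F_def by auto
  have "(\<Union>B\<in>F'. B \<inter> sphere 0 1) \<in> null_sets \<mu>"
  proof (rule null_sets_UN'[OF \<open>countable F'\<close>])
    fix B assume "B \<in> F'"
    then obtain w e where "B = ball w e" "emeasure \<mu> (ball w e \<inter> sphere 0 1) = 0"
      using F' unfolding F_def by auto
    then show "B \<inter> sphere 0 1 \<in> null_sets \<mu>" using assms by (simp add: null_sets_def)
  qed
  then show ?thesis
  proof (rule AE_I')
    show "{z \<in> space \<mu>. \<not> (z \<in> sphere 0 1 \<longrightarrow> z \<in> supp_S1 \<mu>)} \<subseteq> (\<Union>B\<in>F'. B \<inter> sphere 0 1)"
    proof
      fix z assume "z \<in> {z \<in> space \<mu>. \<not> (z \<in> sphere 0 1 \<longrightarrow> z \<in> supp_S1 \<mu>)}"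
      then have z: "z \<in> sphere 0 1" "z \<notin> supp_S1 \<mu>" by auto
      then obtain e where "e > 0" "emeasure \<mu> (ball z e \<inter> sphere 0 1) = 0"
        unfolding supp_S1_def by auto
      then have "z \<in> \<Union>F" unfolding F_def using centre_in_ball by blast
      then show "z \<in> (\<Union>B\<in>F'. B \<inter> sphere 0 1)" using F' z(1) by auto
    qed
  qed
qed

lemma orthogonal_unit_complex_cases:
  fixes z y :: complex
  assumes "norm z = 1" "norm y = 1" "Re (z * cnj y) = 0"
  shows "z = \<i> * y \<or> z = - (\<i> * y)"
proof -
  have "norm (z * cnj y) = 1" using assms by (simp add: norm_mult)
  then have "Im (z * cnj y) = 1 \<or> Im (z * cnj y) = -1"
    using assms(3) unfolding cmod_def by (simp add: power2_eq_1_iff)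
  then have "z * cnj y = \<i> \<or> z * cnj y = - \<i>" using assms(3) by (auto simp: complex_eq_iff)
  moreover have "z * cnj y * y = z"
    using complex_norm_square[of y] assms(2) by (simp add: mult.assoc mult.commute)
  ultimately show ?thesis by (metis mult_minus_left)
qed

lemma abs_Re_mult_cnj_le_1:
  fixes x w :: complex
  assumes "norm x = 1" "norm w = 1"
  shows "\<bar>Re (x * cnj w)\<bar> \<le> 1"
  using abs_Re_le_cmod[of "x * cnj w"] assms by (simp add: norm_mult)

lemma sdist_lt_pi_half_iff:
  assumes "norm x = 1" "norm w = 1"
  shows "sdist x w < pi/2 \<longleftrightarrow> 0 < Re (x * cnj w)"
  using arccos_less_mono[OF abs_Re_mult_cnj_le_1[OF assms], of 0] unfolding sdist_def by simp

lemma sdist_set_le: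
  assumes "w \<in> S" "S \<subseteq> sphere 0 1" "norm x = 1"
  shows "sdist_set x S \<le> sdist x w"
  unfolding sdist_set_def
proof (rule cInf_lower)
  show "sdist x w \<in> sdist x ` S" using assms(1) by simp
  have "0 \<le> sdist x v" if "v \<in> S" for v
    using abs_Re_mult_cnj_le_1[of x v] assms(2,3) that unfolding sdist_def
    by (auto intro!: arccos_lbound)
  then show "bdd_below (sdist x ` S)" by (auto intro: bdd_belowI[of _ 0])
qed

lemma sdist_set_lt_pi_half:
  assumes "w \<in> S" "S \<subseteq> sphere 0 1" "norm x = 1" "0 < Re (x * cnj w)"
  shows "sdist_set x S < pi/2"
  using sdist_set_le[OF assms(1-3)] sdist_lt_pi_half_iff[of x w] assms by force

lemma supp_length_measure_meets_open_halfplane: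
  assumes W: "W11_loop c" and nz: "AE t in lebesgue_on {0..2*pi}. loop_deriv c t \<noteq> 0"
    and y: "norm y = 1"
    and atoms: "emeasure (length_measure c) {\<i> * y} = 0" "emeasure (length_measure c) {- (\<i> * y)} = 0"
  shows "\<exists>w\<in>supp_S1 (length_measure c). Re (w * cnj y) > 0"
proof (rule ccontr)
  assume "\<not> ?thesis"
  then have closed_halfplane: "\<And>w. w \<in> supp_S1 (length_measure c) \<Longrightarrow> Re (w * cnj y) \<le> 0"
    by (auto simp: not_less)
  have "{\<i> * y} \<in> null_sets (length_measure c)" "{- (\<i> * y)} \<in> null_sets (length_measure c)"
    using atoms by (auto simp: null_sets_def)
  then have "AE z in length_measure c. z \<notin> {\<i> * y}" "AE z in length_measure c. z \<notin> {- (\<i> * y)}"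
    by (blast intro: AE_not_in)+
  moreover have "AE z in length_measure c. z \<in> sphere 0 1 \<longrightarrow> z \<in> supp_S1 (length_measure c)"
    by (rule AE_in_supp_S1) simp
  ultimately have "AE z in length_measure c. norm z = 1 \<longrightarrow> Re (z * cnj y) < 0"
  proof eventually_elim
    case (elim z)
    show ?case
    proof
      assume z: "norm z = 1"
      then have "Re (z * cnj y) \<le> 0" using elim closed_halfplane by auto
      moreover have "Re (z * cnj y) \<noteq> 0"
        using orthogonal_unit_complex_cases[OF z y] elim by auto
      ultimately show "Re (z * cnj y) < 0" by simp
    qed
  qed
  from AE_length_measureD[OF W this]
  have "AE t in lebesgue_on {0..2*pi}. Re (loop_deriv c t * cnj y) < 0"
    using nz
  proof eventually_elim
    case (elim t)
    let ?d = "loop_deriv c t"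
    have polar: "?d = of_real (cmod ?d) * sgn ?d"
      using elim(2) by (simp add: sgn_div_norm scaleR_conv_of_real)
    have "Re (?d * cnj y) = cmod ?d * Re (sgn ?d * cnj y)"
      by (subst (1) polar) (simp add: mult.assoc)
    moreover have "Re (sgn ?d * cnj y) < 0" using elim by (simp add: norm_sgn)
    ultimately show ?case using elim(2) by (simp add: mult_pos_neg)
  qed
  with W11_loop_not_AE_Re_deriv_neg[OF W] show False by simp
qed

lemma sets_two_point [simp]: "sets (two_point r x) = sets borel"
  unfolding two_point_def using sets.sigma_sets_eq[of borel] by simp

lemma emeasure_two_point:
  assumes "A \<in> sets borel"
  shows "emeasure (two_point r x) A = ennreal r * (indicator A x + indicator A (-x))"
  unfolding two_point_def
proof (rule emeasure_measure_of_sigma)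
  show "sigma_algebra UNIV (sets borel)"
    using sets.sigma_algebra_axioms[of borel] by simp
  show "positive (sets borel) (\<lambda>A. ennreal r * (indicator A x + indicator A (- x)))"
    unfolding positive_def by simp
  show "countably_additive (sets borel) (\<lambda>A. ennreal r * (indicator A x + indicator A (- x)))"
    unfolding countably_additive_def
  proof (intro allI impI)
    fix F :: "nat \<Rightarrow> complex set" assume "disjoint_family F"
    then have "(\<Sum>i. indicator (F i) z) = (indicator (\<Union>i. F i) z :: ennreal)" for z
      by (rule suminf_indicator)
    then show "(\<Sum>i. ennreal r * (indicator (F i) x + indicator (F i) (- x))) =
        ennreal r * (indicator (\<Union> (range F)) x + indicator (\<Union> (range F)) (- x))"
      by (simp add: ennreal_suminf_cmult suminf_add[symmetric])
  qed
qed (rule assms)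

lemma emeasure_two_point_eq_0:
  assumes "y \<notin> A" "- y \<notin> A"
  shows "emeasure (two_point r y) A = 0"
proof (cases "A \<in> sets borel")
  case True
  then show ?thesis using assms by (simp add: emeasure_two_point)
next
  case False
  then show ?thesis by (simp add: emeasure_notin_sets)
qed

lemma two_point_in_supp_S1:
  assumes "r > 0" "norm y = 1" "z \<in> {y, - y}"
  shows "z \<in> supp_S1 (two_point r y)"
  unfolding supp_S1_def
proof (intro CollectI conjI allI impI)
  show "z \<in> sphere 0 1" using assms(2,3) by auto
  fix e :: real assume "e > 0"
  then have "z \<in> ball z e \<inter> sphere 0 1" using assms(2,3) by auto
  then have "indicator (ball z e \<inter> sphere 0 1) y + indicator (ball z e \<inter> sphere 0 1) (- y) \<noteq> (0::ennreal)"
    using assms(3) by (auto simp: indicator_def)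
  then show "0 < emeasure (two_point r y) (ball z e \<inter> sphere 0 1)"
    using assms(1) by (simp add: emeasure_two_point zero_less_iff_neq_zero)
qed

lemma far_from_supp_two_point:
  assumes "r > 0" "norm y = 1" "norm z = 1" "pi/2 \<le> sdist_set z (supp_S1 (two_point r y))"
  shows "z = \<i> * y \<or> z = - (\<i> * y)"
proof (rule orthogonal_unit_complex_cases[OF assms(3,2)])
  have "\<not> 0 < Re (z * cnj w)" if "w \<in> {y, - y}" for w
    using sdist_set_lt_pi_half[OF two_point_in_supp_S1[OF assms(1,2) that] supp_S1_subset_sphere assms(3)]
      assms(4) by linarith
  from this[of y] this[of "- y"] show "Re (z * cnj y) = 0" by simp
qed

lemma weakly_admissible_two_point:
  assumes W: "W11_loop c" and nz: "AE t in lebesgue_on {0..2*pi}. loop_deriv c t \<noteq> 0"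
    and "r > 0" and y: "norm y = 1"
    and atoms: "emeasure (length_measure c) {\<i> * y} = 0" "emeasure (length_measure c) {- (\<i> * y)} = 0"
  shows "weakly_admissible (two_point r y) (length_measure c)"
  unfolding weakly_admissible_def
proof
  let ?S = "supp_S1 (length_measure c)"
  have "sdist_set w ?S < pi/2" if "w \<in> {y, - y}" for w
  proof -
    have w: "norm w = 1" "emeasure (length_measure c) {\<i> * w} = 0"
        "emeasure (length_measure c) {- (\<i> * w)} = 0"
      using that y atoms by auto
    then obtain v where v: "v \<in> ?S" "0 < Re (v * cnj w)"
      using supp_length_measure_meets_open_halfplane[OF W nz] by blast
    then have "0 < Re (w * cnj v)" by (simp add: mult.commute)
    then show ?thesis by (rule sdist_set_lt_pi_half[OF v(1) supp_S1_subset_sphere w(1)])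
  qed
  then show "emeasure (two_point r y) {z \<in> sphere 0 1. pi/2 \<le> sdist_set z ?S} = 0"
    by (intro emeasure_two_point_eq_0) force+
  have "{z \<in> sphere 0 1. pi/2 \<le> sdist_set z (supp_S1 (two_point r y))} \<subseteq> {\<i> * y} \<union> {- (\<i> * y)}"
    using far_from_supp_two_point[OF \<open>r > 0\<close> y] by auto
  moreover have "{\<i> * y} \<union> {- (\<i> * y)} \<in> null_sets (length_measure c)"
    using atoms by (intro null_sets.Un) (simp_all add: null_sets_def)
  ultimately show "emeasure (length_measure c)
      {z \<in> sphere 0 1. pi/2 \<le> sdist_set z (supp_S1 (two_point r y))} = 0"
    by (metis emeasure_mono le_zero_eq null_setsD1 null_setsD2)
qed

lemma unit_sequence_avoiding_countable:
  fixes x :: complex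
  assumes "norm x = 1" "countable C"
  obtains xs where "\<And>k. xs k \<in> sphere 0 1" "xs \<longlonglongrightarrow> x" "\<And>k. xs k \<notin> C"
proof -
  define rot where "rot t = x * exp (\<i> * of_real t)" for t :: real
  have "inj_on rot {0<..<1}"
  proof (rule inj_onI)
    fix s t :: real assume "s \<in> {0<..<1}" "t \<in> {0<..<1}" "rot s = rot t"
    then have "\<i> * of_real s \<in> ball 0 pi" "\<i> * of_real t \<in> ball 0 pi"
        "exp (\<i> * of_real s) = exp (\<i> * of_real t)"
      using assms(1) pi_gt3 by (auto simp: rot_def norm_mult)
    then show "s = t" using inj_on_exp_pi[of 0] by (auto dest: inj_onD)
  qed
  have "\<exists>t \<in> {0<..<inverse (real (Suc k))}. rot t \<notin> C" for k
  proof (rule ccontr)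
    assume "\<not> ?thesis"
    then have "rot ` {0<..<inverse (real (Suc k))} \<subseteq> C" by auto
    moreover have "inverse (real (Suc k)) \<le> 1" by (simp add: inverse_le_1_iff)
    then have "inj_on rot {0<..<inverse (real (Suc k))}"
      by (intro inj_on_subset[OF \<open>inj_on rot {0<..<1}\<close>]) auto
    ultimately have "countable {0<..<inverse (real (Suc k))}"
      using countable_subset[OF _ assms(2)] countable_image_inj_on by blast
    moreover have "uncountable {0<..<inverse (real (Suc k))}"
      by (subst uncountable_open_interval) simp
    ultimately show False by simp
  qed
  then obtain t where t: "\<And>k. t k \<in> {0<..<inverse (real (Suc k))}" "\<And>k. rot (t k) \<notin> C"
    by metis
  have "norm (t k) \<le> inverse (real (Suc k))" for k
    using t(1)[of k] by simp
  then have "t \<longlonglongrightarrow> 0"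
    by (intro Lim_null_comparison[OF always_eventually LIMSEQ_inverse_real_of_nat]) blast
  then have "(\<lambda>k. rot (t k)) \<longlonglongrightarrow> rot 0"
    unfolding rot_def by (intro tendsto_intros)
  moreover have "rot 0 = x" by (simp add: rot_def)
  moreover have "rot s \<in> sphere 0 1" for s
    using assms(1) by (simp add: rot_def norm_mult)
  ultimately show thesis using t(2) by (intro that[of "\<lambda>k. rot (t k)"]) auto
qed

lemma unit_sequence_avoiding_rotated_atoms:
  fixes x :: complex and M :: "complex measure"
  assumes "finite_measure M" "norm x = 1"
  obtains xs where "\<And>k. xs k \<in> sphere 0 1" "xs \<longlonglongrightarrow> x"
    "\<And>k. emeasure M {\<i> * xs k} = 0" "\<And>k. emeasure M {- (\<i> * xs k)} = 0"
proof -
  interpret finite_measure M by (rule assms(1))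
  define atoms where "atoms = {z. measure M {z} \<noteq> 0}"
  have "countable ((\<lambda>z. - \<i> * z) ` atoms \<union> (\<lambda>z. \<i> * z) ` atoms)"
    unfolding atoms_def using countable_support by blast
  then obtain xs where xs: "\<And>k. xs k \<in> sphere 0 1" "xs \<longlonglongrightarrow> x"
      "\<And>k. xs k \<notin> (\<lambda>z. - \<i> * z) ` atoms \<union> (\<lambda>z. \<i> * z) ` atoms"
    using unit_sequence_avoiding_countable[OF assms(2)] by blast
  have "\<i> * xs k \<notin> atoms \<and> - (\<i> * xs k) \<notin> atoms" for k
  proof -
    have "xs k = - \<i> * (\<i> * xs k)" "xs k = \<i> * - (\<i> * xs k)" by simp_all
    then show ?thesis using xs(3)[of k] by (metis UnI1 UnI2 image_eqI)
  qed
  then show thesis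
    using xs(1,2) by (intro that) (auto simp: atoms_def emeasure_eq_measure)
qed

theorem lemma3p5:
  fixes c :: "nat \<Rightarrow> real \<Rightarrow> complex" and j i :: nat and r :: real and x :: complex
  assumes "convex_loop (c 0)" and "convex_loop (c 1)"
    and "j \<in> {0, 1}" and "i = 1 - j"
    and "r > 0" and "x \<in> sphere 0 1"
    and "length_measure (c j) = two_point r x"
  shows "\<exists>xs :: nat \<Rightarrow> complex. (\<forall>k. xs k \<in> sphere 0 1) \<and> xs \<longlonglongrightarrow> x \<and>
           (\<forall>k. weakly_admissible (two_point r (xs k)) (length_measure (c i)))"
proof -
  have "convex_loop (c i)" using assms(1-4) by auto
  then have W: "W11_loop (c i)" and nz: "AE t in lebesgue_on {0..2*pi}. loop_deriv (c i) t \<noteq> 0"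
    unfolding convex_loop_def by auto
  have "norm x = 1" using assms(6) by simp
  then obtain xs where xs: "\<And>k. xs k \<in> sphere 0 1" "xs \<longlonglongrightarrow> x"
    "\<And>k. emeasure (length_measure (c i)) {\<i> * xs k} = 0"
    "\<And>k. emeasure (length_measure (c i)) {- (\<i> * xs k)} = 0"
    using unit_sequence_avoiding_rotated_atoms[OF finite_measure_length_measure[OF W]] by blast
  have "weakly_admissible (two_point r (xs k)) (length_measure (c i))" for k
    using weakly_admissible_two_point[OF W nz \<open>r > 0\<close> _ xs(3,4)] xs(1) by simp
  with xs(1,2) show ?thesis by auto
qed

end
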